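(* Let $\varepsilon>0$ and $f^\varepsilon\in L^2(\Omega)$. Let $\phi^\varepsilon\in\mathcal{V}$ satisfy $$\int_\Omega \nabla\cdot(b\phi^\varepsilon)\,\nabla\cdot(b\psi)\,dx+\varepsilon\int_\Omega\phi^\varepsilon\psi\,dx=\int_\Omega f^\varepsilon\psi\,dx\quad\text{for all }\psi\in\mathcal{V},$$ and write $\phi^\varepsilon=p^\varepsilon+q^\varepsilon$ with $p^\varepsilon\in K$, $q^\varepsilon\in K^\perp$. Then $$q^\varepsilon=b\cdot\nabla h^\varepsilon,$$ where $h^\varepsilon\in\mathcal{W}_0$ satisfies, for all $\theta\in\mathcal{W}_0$ (with $\nabla\cdot((b\otimes b)\nabla\theta)=\nabla\cdot(b\,(b\cdot\nabla\theta))$ in $L^2(\Omega)$ for the relevant functions), $$\int_\Omega \nabla\cdot\big((b\otimes b)\nabla h^\varepsilon\big)\,\nabla\cdot\big((b\otimes b)\nabla\theta\big)\,dx+\varepsilon\int_\Omega(b\cdot\nabla h^\varepsilon)(b\cdot\nabla\theta)\,dx=\int_\Omega f^\varepsilon\,(b\cdot\nabla\theta)\,dx .$$ This is the weak form of the fourth-order problem $$-\nabla\cdot\Big[(b\otimes b)\nabla\big(\nabla\cdot((b\otimes b)\nabla h^\varepsilon)\big)\Big]+\varepsilon\,\nabla\cdot\big((b\otimes b)\nabla h^\varepsilon\big)=\nabla\cdot(bf^\varepsilon)\ \text{in }\Omega,$$ $$(b\cdot\nu)\,\nabla\cdot\big((b\otimes b)\nabla h^\varepsilon\big)=0\ \text{on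 }\partial\Omega,\qquad (b\cdot\nu)h^\varepsilon=0\ \text{on }\partial\Omega.$$
   Context: Let $\Omega\subset\mathbb{R}^d$ ($d=2$ or $3$) be a bounded domain with Lipschitz boundary and unit outward normal $\nu$, and $b$ a $C^1$ unit vector field on $\overline{\Omega}$; $b\otimes b$ is the matrix $(b_ib_j)$, so $(b\otimes b)\nabla h=b\,(b\cdot\nabla h)$. Spaces (derivatives in the distributional sense): $\mathcal{V}=\{\phi\in L^2(\Omega) : \nabla\cdot(b\phi)\in L^2(\Omega)\}$, $K=\{\phi\in\mathcal{V} : \nabla\cdot(b\phi)=0\}$, $\mathcal{W}=\{h\in L^2(\Omega) : (b\cdot\nabla)h\in L^2(\Omega)\}$, $\mathcal{W}_0=\{h\in\mathcal{W} : (b\cdot\nu)h=0\text{ on }\partial\Omega\}$; $K^\perp$ is the orthogonal complement of $K$ in $L^2(\Omega)$. Standing assumption: $K$ is closed in $L^2(\Omega)$ and $K^\perp=(b\cdot\nabla)\mathcal{W}_0$ (this holds, e.g., when every field line of $b$ either is tangent to $\partial\Omega$ on a set of positive measure or enters and leaves $\Omega$ through points $x_\mp$ with $\mp(b\cdot\nu)(x_\mp)>0$, with uniformly bounded arc lengths). *)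

theory Defs
  imports "HOL-Analysis.Analysis"
begin

fun Ck :: "nat \<Rightarrow> ('a::euclidean_space \<Rightarrow> real) \<Rightarrow> bool" where
  "Ck 0 f = continuous_on UNIV f"
| "Ck (Suc k) f = ((\<forall>x. f differentiable (at x)) \<and>
                    (\<forall>v. Ck k (\<lambda>x. frechet_derivative f (at x) v)))"

definition smooth :: "('a::euclidean_space \<Rightarrow> real) \<Rightarrow> bool" where
  "smooth f \<longleftrightarrow> (\<forall>k. Ck k f)"

definition test_fun :: "'a::euclidean_space set \<Rightarrow> ('a \<Rightarrow> real) \<Rightarrow> bool" where
  "test_fun \<Omega> w \<longleftrightarrow> smooth w \<and> (\<exists>C. compact C \<and> C \<subseteq> \<Omega> \<and> (\<forall>x. x \<notin> C \<longrightarrow> w x = 0))"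

definition cdiv :: "('a::euclidean_space \<Rightarrow> 'a) \<Rightarrow> 'a \<Rightarrow> real" where
  "cdiv F x = (\<Sum>i\<in>Basis. frechet_derivative F (at x) i \<bullet> i)"

definition cdir :: "('a::euclidean_space \<Rightarrow> 'a) \<Rightarrow> ('a \<Rightarrow> real) \<Rightarrow> 'a \<Rightarrow> real" where
  "cdir b w x = frechet_derivative w (at x) (b x)"

definition lipschitz_domain :: "'a::euclidean_space set \<Rightarrow> bool" where
  "lipschitz_domain \<Omega> \<longleftrightarrow> open \<Omega> \<and> bounded \<Omega> \<and> connected \<Omega> \<and> \<Omega> \<noteq> {} \<and>
     (\<forall>x\<in>frontier \<Omega>. \<exists>r>0. \<exists>e. norm e = 1 \<and> (\<exists>g :: 'a \<Rightarrow> real. \<exists>L.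
         (\<forall>y z. \<bar>g y - g z\<bar> \<le> L * norm (y - z)) \<and>
         \<Omega> \<inter> ball x r = {y \<in> ball x r. y \<bullet> e < g (y - (y \<bullet> e) *\<^sub>R e)}))"

definition C1_unit_field :: "'a::euclidean_space set \<Rightarrow> ('a \<Rightarrow> 'a) \<Rightarrow> bool" where
  "C1_unit_field \<Omega> b \<longleftrightarrow> (\<forall>x\<in>closure \<Omega>. norm (b x) = 1) \<and>
     (\<exists>U b'. open U \<and> closure \<Omega> \<subseteq> U \<and> continuous_on U b' \<and>
        (\<forall>x\<in>U. (b has_derivative blinfun_apply (b' x)) (at x)))"

definition L2 :: "'a::euclidean_space set \<Rightarrow> ('a \<Rightarrow> real) \<Rightarrow> bool" where
  "L2 \<Omega> f \<longleftrightarrow> f \<in> borel_measurable (lebesgue_on \<Omega>) \<and>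
                integrable (lebesgue_on \<Omega>) (\<lambda>x. (f x)\<^sup>2)"

definition ip :: "'a::euclidean_space set \<Rightarrow> ('a \<Rightarrow> real) \<Rightarrow> ('a \<Rightarrow> real) \<Rightarrow> real" where
  "ip \<Omega> f g = integral\<^sup>L (lebesgue_on \<Omega>) (\<lambda>x. f x * g x)"

definition ae_eq :: "'a::euclidean_space set \<Rightarrow> ('a \<Rightarrow> real) \<Rightarrow> ('a \<Rightarrow> real) \<Rightarrow> bool" where
  "ae_eq \<Omega> f g \<longleftrightarrow> (AE x in lebesgue_on \<Omega>. f x = g x)"

text \<open>g is the distributional divergence div(b phi) in Omega.\<close>
definition weak_div :: "'a::euclidean_space set \<Rightarrow> ('a \<Rightarrow> 'a) \<Rightarrow> ('a \<Rightarrow> real) \<Rightarrow> ('a \<Rightarrow> real) \<Rightarrow> bool" where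
  "weak_div \<Omega> b \<phi> g \<longleftrightarrow> (\<forall>w. test_fun \<Omega> w \<longrightarrow> ip \<Omega> \<phi> (cdir b w) = - ip \<Omega> g w)"

text \<open>g is the distributional derivative (b . grad) h in Omega.\<close>
definition weak_bgrad :: "'a::euclidean_space set \<Rightarrow> ('a \<Rightarrow> 'a) \<Rightarrow> ('a \<Rightarrow> real) \<Rightarrow> ('a \<Rightarrow> real) \<Rightarrow> bool" where
  "weak_bgrad \<Omega> b h g \<longleftrightarrow>
     (\<forall>w. test_fun \<Omega> w \<longrightarrow> ip \<Omega> h (cdiv (\<lambda>y. w y *\<^sub>R b y)) = - ip \<Omega> g w)"

definition V_space :: "'a::euclidean_space set \<Rightarrow> ('a \<Rightarrow> 'a) \<Rightarrow> ('a \<Rightarrow> real) set" where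
  "V_space \<Omega> b = {\<phi>. L2 \<Omega> \<phi> \<and> (\<exists>g. L2 \<Omega> g \<and> weak_div \<Omega> b \<phi> g)}"

definition K_space :: "'a::euclidean_space set \<Rightarrow> ('a \<Rightarrow> 'a) \<Rightarrow> ('a \<Rightarrow> real) set" where
  "K_space \<Omega> b = {\<phi>. L2 \<Omega> \<phi> \<and> weak_div \<Omega> b \<phi> (\<lambda>_. 0)}"

definition W_space :: "'a::euclidean_space set \<Rightarrow> ('a \<Rightarrow> 'a) \<Rightarrow> ('a \<Rightarrow> real) set" where
  "W_space \<Omega> b = {h. L2 \<Omega> h \<and> (\<exists>g. L2 \<Omega> g \<and> weak_bgrad \<Omega> b h g)}"

text \<open>Boundary condition (b . nu) h = 0 on the boundary, in the weak (Green formula) sense: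
  for all smooth psi on the whole space (no support condition),
  integral of ((b.grad)h) psi + h div(b psi) over Omega vanishes.\<close>
definition W0_space :: "'a::euclidean_space set \<Rightarrow> ('a \<Rightarrow> 'a) \<Rightarrow> ('a \<Rightarrow> real) set" where
  "W0_space \<Omega> b = {h. L2 \<Omega> h \<and> (\<exists>g. L2 \<Omega> g \<and> weak_bgrad \<Omega> b h g \<and>
      (\<forall>\<psi>. smooth \<psi> \<longrightarrow> ip \<Omega> g \<psi> + ip \<Omega> h (cdiv (\<lambda>y. \<psi> y *\<^sub>R b y)) = 0))}"

definition perp :: "'a::euclidean_space set \<Rightarrow> ('a \<Rightarrow> real) set \<Rightarrow> ('a \<Rightarrow> real) set" where
  "perp \<Omega> S = {q. L2 \<Omega> q \<and> (\<forall>k\<in>S. ip \<Omega> q k = 0)}"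

definition L2_closed :: "'a::euclidean_space set \<Rightarrow> ('a \<Rightarrow> real) set \<Rightarrow> bool" where
  "L2_closed \<Omega> S \<longleftrightarrow> (\<forall>u k. (\<forall>n. u n \<in> S) \<longrightarrow> L2 \<Omega> k \<longrightarrow>
      ((\<lambda>n. integral\<^sup>L (lebesgue_on \<Omega>) (\<lambda>x. (u n x - k x)\<^sup>2)) \<longlonglongrightarrow> 0) \<longrightarrow> k \<in> S)"

end

theory Submission
  imports Defs
begin

(* By the standing
   assumption q = b.grad h a.e. for some h in W0, so phi = p + b.grad h a.e.
   Two observations finish the proof:
   (1) p is divergence free, so b.grad h has the same weak divergence as phi, namely
       phidiv; this gives div((b x b) grad h) = phidiv in L2.
   (2) for theta in W0 the function b.grad theta lies in K-perp, so pairing phi with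
       it only sees b.grad h; moreover b.grad theta is an admissible test function psi
       in V whenever its divergence is in L2.
   Substituting psi = b.grad theta in the weak equation for phi gives the fourth-order
   weak equation for h. *)

text \<open>The product of two L2 functions is integrable, by the pointwise bound
  2|fg| <= f^2 + g^2; this makes ip a genuine (bilinear) integral.\<close>
lemma L2_mult_integrable:
  assumes "L2 \<Omega> f" "L2 \<Omega> g"
  shows "integrable (lebesgue_on \<Omega>) (\<lambda>x. f x * g x)"
proof (rule Bochner_Integration.integrable_bound[where f="\<lambda>x. (f x)\<^sup>2 + (g x)\<^sup>2"])
  show "integrable (lebesgue_on \<Omega>) (\<lambda>x. (f x)\<^sup>2 + (g x)\<^sup>2)"
    and "(\<lambda>x. f x * g x) \<in> borel_measurable (lebesgue_on \<Omega>)"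
    using assms unfolding L2_def by auto
  have "2 * \<bar>u * v\<bar> \<le> u\<^sup>2 + v\<^sup>2" for u v :: real
    using sum_squares_bound[of "\<bar>u\<bar>" "\<bar>v\<bar>"] by (simp add: abs_mult)
  then show "AE x in lebesgue_on \<Omega>. norm (f x * g x) \<le> norm ((f x)\<^sup>2 + (g x)\<^sup>2)"
    by (intro AE_I2) (smt (verit) real_norm_def zero_le_power2)
qed

lemma L2_add:
  assumes f: "L2 \<Omega> f" and g: "L2 \<Omega> g"
  shows "L2 \<Omega> (\<lambda>x. f x + g x)"
proof -
  have "(\<lambda>x. (f x + g x)\<^sup>2) = (\<lambda>x. f x * f x + 2 * (f x * g x) + g x * g x)"
    by (simp add: power2_eq_square algebra_simps)
  moreover have "integrable (lebesgue_on \<Omega>) (\<lambda>x. f x * f x + 2 * (f x * g x) + g x * g x)"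
    using L2_mult_integrable[OF f f] L2_mult_integrable[OF f g] L2_mult_integrable[OF g g]
    by auto
  ultimately show ?thesis using f g unfolding L2_def by auto
qed

lemma ip_commute: "ip \<Omega> f g = ip \<Omega> g f"
  unfolding ip_def by (simp add: mult.commute)

lemma ip_cong_ae:
  assumes "L2 \<Omega> f" "L2 \<Omega> f'" "L2 \<Omega> c" "ae_eq \<Omega> f f'"
  shows "ip \<Omega> f c = ip \<Omega> f' c"
  unfolding ip_def
  by (rule integral_cong_AE) (use assms in \<open>auto simp: L2_def ae_eq_def\<close>)

lemma ip_add_left:
  assumes "L2 \<Omega> f" "L2 \<Omega> g" "L2 \<Omega> c"
  shows "ip \<Omega> (\<lambda>x. f x + g x) c = ip \<Omega> f c + ip \<Omega> g c"
  unfolding ip_def distrib_right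
  using L2_mult_integrable[OF assms(1,3)] L2_mult_integrable[OF assms(2,3)] by simp

text \<open>A function continuous on a compact set containing a set of finite measure is
  bounded there, hence square integrable.\<close>
lemma continuous_on_compact_L2:
  assumes C: "compact C" "\<Omega> \<subseteq> C" and lm: "\<Omega> \<in> lmeasurable"
    and u: "continuous_on C u"
  shows "L2 \<Omega> u"
proof -
  obtain M where M: "\<And>x. x \<in> C \<Longrightarrow> \<bar>u x\<bar> \<le> M"
    using compact_imp_bounded[OF compact_continuous_image[OF u C(1)]]
    by (auto simp: bounded_iff)
  have meas: "u \<in> borel_measurable (lebesgue_on \<Omega>)"
    using continuous_imp_measurable_on_sets_lebesgue[OF continuous_on_subset[OF u C(2)]] lm
    by auto
  interpret finite_measure "lebesgue_on \<Omega>" using finite_measure_lebesgue_on[OF lm] .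
  have "integrable (lebesgue_on \<Omega>) (\<lambda>x. (u x)\<^sup>2)"
  proof (rule integrable_const_bound[where B="M\<^sup>2"])
    have "(u x)\<^sup>2 \<le> M\<^sup>2" if "x \<in> C" for x
      using power_mono[OF M[OF that] abs_ge_zero, of 2] by simp
    then show "AE x in lebesgue_on \<Omega>. norm ((u x)\<^sup>2) \<le> M\<^sup>2"
      using C(2) by (intro AE_I2) auto
  qed (use meas in auto)
  then show ?thesis using meas unfolding L2_def by blast
qed

text \<open>In coordinates, b.grad w = sum_i b_i (d_i w); hence it is continuous wherever b is,
  provided w is C^1.\<close>
lemma cdir_continuous_on:
  assumes w: "Ck 1 w" and b: "continuous_on S b"
  shows "continuous_on S (cdir b w)"
proof -
  from w have diff: "\<And>x. w differentiable (at x)"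
    and D: "\<And>v. continuous_on UNIV (\<lambda>x. frechet_derivative w (at x) v)" by auto
  have "cdir b w = (\<lambda>x. \<Sum>i\<in>Basis. (b x \<bullet> i) * frechet_derivative w (at x) i)"
  proof
    fix x
    have lin: "linear (frechet_derivative w (at x))"
      using diff[of x] frechet_derivative_works has_derivative_linear by blast
    have "cdir b w x = frechet_derivative w (at x) (\<Sum>i\<in>Basis. (b x \<bullet> i) *\<^sub>R i)"
      unfolding cdir_def by (simp add: euclidean_representation)
    also have "\<dots> = (\<Sum>i\<in>Basis. (b x \<bullet> i) * frechet_derivative w (at x) i)"
      using lin by (simp add: linear_sum linear_scale)
    finally show "cdir b w x = (\<Sum>i\<in>Basis. (b x \<bullet> i) * frechet_derivative w (at x) i)" .
  qed
  then show ?thesis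
    by (simp only:) (intro continuous_on_sum continuous_on_mult continuous_on_inner b
        continuous_on_const continuous_on_subset[OF D] subset_UNIV)
qed

lemma C1_unit_field_continuous:
  assumes "C1_unit_field \<Omega> b"
  shows "continuous_on (closure \<Omega>) b"
  using assms unfolding C1_unit_field_def
  by (meson continuous_at_imp_continuous_on has_derivative_continuous subsetD)

text \<open>For a test function w on a bounded open set, b.grad w is in L2; this is what makes
  the defining identity of a weak divergence meaningful for L2 functions.\<close>
lemma cdir_test_fun_L2:
  assumes w: "test_fun \<Omega> w" and b: "C1_unit_field \<Omega> b" and "bounded \<Omega>" "open \<Omega>"
  shows "L2 \<Omega> (cdir b w)"
proof (rule continuous_on_compact_L2)
  show "compact (closure \<Omega>)" using \<open>bounded \<Omega>\<close> by (simp add: compact_closure)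
  show "\<Omega> \<in> lmeasurable" using assms(3,4) lmeasurable_open by blast
  have "Ck 1 w" using w unfolding test_fun_def smooth_def by blast
  then show "continuous_on (closure \<Omega>) (cdir b w)"
    using cdir_continuous_on C1_unit_field_continuous[OF b] by blast
qed (rule closure_subset)

lemma weak_div_of_complement:
  assumes b: "C1_unit_field \<Omega> b" and "bounded \<Omega>" "open \<Omega>"
    and L: "L2 \<Omega> \<phi>" "L2 \<Omega> p" "L2 \<Omega> q"
    and decomp: "ae_eq \<Omega> \<phi> (\<lambda>x. p x + q x)"
    and pdiv: "weak_div \<Omega> b p (\<lambda>_. 0)" and phidiv: "weak_div \<Omega> b \<phi> g"
  shows "weak_div \<Omega> b q g"
  unfolding weak_div_def
proof (intro allI impI)
  fix w assume w: "test_fun \<Omega> w"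
  have Lc: "L2 \<Omega> (cdir b w)" using cdir_test_fun_L2[OF w b \<open>bounded \<Omega>\<close> \<open>open \<Omega>\<close>] .
  have "ip \<Omega> q (cdir b w) = ip \<Omega> p (cdir b w) + ip \<Omega> q (cdir b w)"
    using pdiv w unfolding weak_div_def ip_def by simp
  also have "\<dots> = ip \<Omega> \<phi> (cdir b w)"
    using ip_add_left[OF L(2,3) Lc] ip_cong_ae[OF L(1) L2_add[OF L(2,3)] Lc decomp] by simp
  also have "\<dots> = - ip \<Omega> g w" using phidiv w unfolding weak_div_def by simp
  finally show "ip \<Omega> q (cdir b w) = - ip \<Omega> g w" .
qed

lemma ip_perp_component:
  assumes L: "L2 \<Omega> \<phi>" "L2 \<Omega> p" "L2 \<Omega> q"
    and decomp: "ae_eq \<Omega> \<phi> (\<lambda>x. p x + q x)"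
    and pK: "p \<in> K" and k: "k \<in> perp \<Omega> K"
  shows "ip \<Omega> \<phi> k = ip \<Omega> q k"
proof -
  have Lk: "L2 \<Omega> k" and "ip \<Omega> k p = 0" using k pK unfolding perp_def by auto
  then have "ip \<Omega> p k = 0" by (simp add: ip_commute)
  then show ?thesis
    using ip_cong_ae[OF L(1) L2_add[OF L(2,3)] Lk decomp] ip_add_left[OF L(2,3) Lk] by simp
qed

theorem proposition2p3:
  fixes \<Omega> :: "'a::euclidean_space set" and b :: "'a \<Rightarrow> 'a"
    and \<epsilon> :: real and f \<phi> p q \<phi>div :: "'a \<Rightarrow> real"
  assumes dim: "DIM('a) = 2 \<or> DIM('a) = 3"
    and dom: "lipschitz_domain \<Omega>"
    and bfield: "C1_unit_field \<Omega> b"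
    and Kclosed: "L2_closed \<Omega> (K_space \<Omega> b)"
    and Kperp: "perp \<Omega> (K_space \<Omega> b) =
                {q. L2 \<Omega> q \<and> (\<exists>h g. h \<in> W0_space \<Omega> b \<and> L2 \<Omega> g \<and>
                                    weak_bgrad \<Omega> b h g \<and> ae_eq \<Omega> q g)}"
    and eps: "\<epsilon> > 0"
    and f: "L2 \<Omega> f"
    and phiV: "\<phi> \<in> V_space \<Omega> b"
    and phidiv: "L2 \<Omega> \<phi>div" "weak_div \<Omega> b \<phi> \<phi>div"
    and weak: "\<And>\<psi> \<psi>div. \<psi> \<in> V_space \<Omega> b \<Longrightarrow> L2 \<Omega> \<psi>div \<Longrightarrow> weak_div \<Omega> b \<psi> \<psi>div \<Longrightarrow>
                 ip \<Omega> \<phi>div \<psi>div + \<epsilon> * ip \<Omega> \<phi> \<psi> = ip \<Omega> f \<psi>"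
    and pK: "p \<in> K_space \<Omega> b"
    and qKp: "q \<in> perp \<Omega> (K_space \<Omega> b)"
    and decomp: "ae_eq \<Omega> \<phi> (\<lambda>x. p x + q x)"
  shows "\<exists>h bh Dh. h \<in> W0_space \<Omega> b \<and> L2 \<Omega> bh \<and> weak_bgrad \<Omega> b h bh \<and>
           ae_eq \<Omega> q bh \<and> L2 \<Omega> Dh \<and> weak_div \<Omega> b bh Dh \<and>
           (\<forall>\<theta> b\<theta> D\<theta>. \<theta> \<in> W0_space \<Omega> b \<longrightarrow> L2 \<Omega> b\<theta> \<longrightarrow> weak_bgrad \<Omega> b \<theta> b\<theta> \<longrightarrow>
               L2 \<Omega> D\<theta> \<longrightarrow> weak_div \<Omega> b b\<theta> D\<theta> \<longrightarrow>
               ip \<Omega> Dh D\<theta> + \<epsilon> * ip \<Omega> bh b\<theta> = ip \<Omega> f b\<theta>)"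
proof -
  have open_bounded: "open \<Omega>" "bounded \<Omega>" using dom unfolding lipschitz_domain_def by auto
  have L: "L2 \<Omega> \<phi>" "L2 \<Omega> p" and pdiv: "weak_div \<Omega> b p (\<lambda>_. 0)"
    using phiV pK unfolding V_space_def K_space_def by auto
  from qKp Kperp obtain h g where h: "h \<in> W0_space \<Omega> b" "L2 \<Omega> g" "weak_bgrad \<Omega> b h g"
    and qg: "ae_eq \<Omega> q g" by blast
  have decomp_g: "ae_eq \<Omega> \<phi> (\<lambda>x. p x + g x)"
    using decomp qg unfolding ae_eq_def by (auto elim: AE_mp)
  have gdiv: "weak_div \<Omega> b g \<phi>div"
    using weak_div_of_complement[OF bfield open_bounded(2,1) L h(2) decomp_g pdiv phidiv(2)] .
  have "ip \<Omega> \<phi>div D\<theta> + \<epsilon> * ip \<Omega> g b\<theta> = ip \<Omega> f b\<theta>"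
    if "\<theta> \<in> W0_space \<Omega> b" "L2 \<Omega> b\<theta>" "weak_bgrad \<Omega> b \<theta> b\<theta>" "L2 \<Omega> D\<theta>"
      "weak_div \<Omega> b b\<theta> D\<theta>" for \<theta> b\<theta> D\<theta>
  proof -
    have "b\<theta> \<in> V_space \<Omega> b" using that unfolding V_space_def by blast
    moreover have "b\<theta> \<in> perp \<Omega> (K_space \<Omega> b)"
      unfolding Kperp using that unfolding ae_eq_def by blast
    then have "ip \<Omega> \<phi> b\<theta> = ip \<Omega> g b\<theta>"
      using ip_perp_component[OF L h(2) decomp_g pK] by simp
    ultimately show ?thesis using weak[OF _ that(4,5)] by simp
  qed
  then show ?thesis using h qg phidiv(1) gdiv by blast
qed

end
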